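(* Let $\alpha>0$ and $0\le m<s<M$. If $f_n\in\mathcal{F}(m,M,s)$ for $n=1,2,\dots$ and $f_n\to f$ a.e. on $[-\pi,\pi]$, then $u_{f_n}\to u_f$ uniformly on $[-\pi,\pi]$. Moreover, there is a subsequence $(f_{n_k})$ with $\lim_{k\to\infty}\operatorname{osc}(u_{f_{n_k}})=\operatorname{osc}(u_f)$.
   Context: Robin problem: for $\alpha>0$ and $f\in L^1[-\pi,\pi]$, find $u\in C^1[-\pi,\pi]$ with $u'$ absolutely continuous on $[-\pi,\pi]$, $-u''=f$ a.e. on $(-\pi,\pi)$, and $-u'(-\pi)+\alpha u(-\pi)=u'(\pi)+\alpha u(\pi)=0$. It has a unique solution $u_f(x)=\int_{-\pi}^{\pi}G(x,y)f(y)\,dy$, where $G(x,y)=-\tfrac12 c_\alpha xy-\tfrac12|x-y|+\tfrac{1}{2c_\alpha}$ and $c_\alpha=\alpha/(1+\alpha\pi)$. For $0\le m<s<M$, $\mathcal{F}(m,M,s)$ is the set of $f\in L^1[-\pi,\pi]$ with $m\le f\le M$ and $\|f\|_{L^1}=2\pi s$. $\operatorname{osc}(u)=\max_{[-\pi,\pi]}u-\min_{[-\pi,\pi]}u$. *)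

theory Defs
  imports "HOL-Analysis.Analysis"
begin

definition c_alpha :: "real \<Rightarrow> real" where
  "c_alpha \<alpha> = \<alpha> / (1 + \<alpha> * pi)"

definition green :: "real \<Rightarrow> real \<Rightarrow> real \<Rightarrow> real" where
  "green \<alpha> x y = - (1/2) * c_alpha \<alpha> * x * y - (1/2) * \<bar>x - y\<bar> + 1 / (2 * c_alpha \<alpha>)"

text \<open>The solution u_f of the Robin problem, given by the Green function representation.\<close>
definition u_sol :: "real \<Rightarrow> (real \<Rightarrow> real) \<Rightarrow> real \<Rightarrow> real" where
  "u_sol \<alpha> f x = (LINT y:{-pi..pi}|lebesgue. green \<alpha> x y * f y)"

definition Fam :: "real \<Rightarrow> real \<Rightarrow> real \<Rightarrow> (real \<Rightarrow> real) set" where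
  "Fam m M s = {f. set_integrable lebesgue {-pi..pi} f
      \<and> (AE x in lebesgue. x \<in> {-pi..pi} \<longrightarrow> m \<le> f x \<and> f x \<le> M)
      \<and> (LINT x:{-pi..pi}|lebesgue. \<bar>f x\<bar>) = 2 * pi * s}"

definition osc :: "(real \<Rightarrow> real) \<Rightarrow> real" where
  "osc u = Sup (u ` {-pi..pi}) - Inf (u ` {-pi..pi})"

end

theory Submission
  imports Defs
begin

(* The Green function is continuous, hence bounded by some K on [-pi,pi]^2, so
   |u_g x - u_h x| <= K * ||g - h||_1 for all x. The bounds m <= f_n <= M and dominated
   convergence give f_n -> f in L^1, hence u_{f_n} -> u_f uniformly. Sup and Inf over
   [-pi,pi] are 1-Lipschitz for the sup distance, so the oscillations converge along the
   whole sequence and the subsequence can be taken to be the identity. *)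

lemma Sup_image_diff_le:
  fixes f g :: "'a \<Rightarrow> real"
  assumes "S \<noteq> {}" "bdd_above (g ` S)" and d: "\<And>x. x \<in> S \<Longrightarrow> \<bar>f x - g x\<bar> \<le> d"
  shows "\<bar>Sup (f ` S) - Sup (g ` S)\<bar> \<le> d"
proof -
  obtain b where b: "\<And>x. x \<in> S \<Longrightarrow> g x \<le> b"
    using assms(2) by (auto simp: bdd_above_def)
  have "bdd_above (f ` S)"
    using b d by (intro bdd_aboveI2[of _ _ "b + d"]) (smt (verit))
  then have "\<And>x. x \<in> S \<Longrightarrow> g x \<le> Sup (f ` S) + d" "\<And>x. x \<in> S \<Longrightarrow> f x \<le> Sup (g ` S) + d"
    using assms cSUP_upper by (smt (verit))+
  then have "Sup (g ` S) \<le> Sup (f ` S) + d" "Sup (f ` S) \<le> Sup (g ` S) + d"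
    using assms(1) by (auto intro: cSUP_least)
  then show ?thesis by linarith
qed

lemma Inf_image_diff_le:
  fixes f g :: "'a \<Rightarrow> real"
  assumes "S \<noteq> {}" "bdd_below (g ` S)" and d: "\<And>x. x \<in> S \<Longrightarrow> \<bar>f x - g x\<bar> \<le> d"
  shows "\<bar>Inf (f ` S) - Inf (g ` S)\<bar> \<le> d"
proof -
  have "bdd_above (uminus ` g ` S)"
    using assms(2) by (rule bdd_above_uminus[THEN iffD2])
  then have "\<bar>Sup ((\<lambda>x. - f x) ` S) - Sup ((\<lambda>x. - g x) ` S)\<bar> \<le> d"
    using d by (intro Sup_image_diff_le[OF assms(1)]) (auto simp: image_image abs_minus_commute)
  then show ?thesis
    unfolding Inf_real_def image_image by linarith
qed

lemma
  fixes g :: "'b \<Rightarrow> 'a \<Rightarrow> real"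
  assumes lim: "uniform_limit S g u F" and "S \<noteq> {}" and bdd: "bounded (u ` S)"
  shows tendsto_Sup_image_uniform_limit: "((\<lambda>n. Sup (g n ` S)) \<longlongrightarrow> Sup (u ` S)) F"
    and tendsto_Inf_image_uniform_limit: "((\<lambda>n. Inf (g n ` S)) \<longlongrightarrow> Inf (u ` S)) F"
proof -
  have close: "\<forall>\<^sub>F n in F. \<forall>x\<in>S. \<bar>g n x - u x\<bar> \<le> e / 2" if "e > 0" for e
    using uniform_limitD[OF lim, of "e / 2"] that
    by (auto simp: dist_real_def elim!: eventually_mono)
  show "((\<lambda>n. Sup (g n ` S)) \<longlongrightarrow> Sup (u ` S)) F"
  proof (rule tendstoI)
    fix e :: real assume "e > 0"
    from close[OF this] show "\<forall>\<^sub>F n in F. dist (Sup (g n ` S)) (Sup (u ` S)) < e"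
    proof (rule eventually_mono)
      fix n assume "\<forall>x\<in>S. \<bar>g n x - u x\<bar> \<le> e / 2"
      then have "\<bar>Sup (g n ` S) - Sup (u ` S)\<bar> \<le> e / 2"
        by (intro Sup_image_diff_le[OF \<open>S \<noteq> {}\<close> bounded_imp_bdd_above[OF bdd]]) auto
      with \<open>e > 0\<close> show "dist (Sup (g n ` S)) (Sup (u ` S)) < e"
        by (simp add: dist_real_def)
    qed
  qed
  show "((\<lambda>n. Inf (g n ` S)) \<longlongrightarrow> Inf (u ` S)) F"
  proof (rule tendstoI)
    fix e :: real assume "e > 0"
    from close[OF this] show "\<forall>\<^sub>F n in F. dist (Inf (g n ` S)) (Inf (u ` S)) < e"
    proof (rule eventually_mono)
      fix n assume "\<forall>x\<in>S. \<bar>g n x - u x\<bar> \<le> e / 2"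
      then have "\<bar>Inf (g n ` S) - Inf (u ` S)\<bar> \<le> e / 2"
        by (intro Inf_image_diff_le[OF \<open>S \<noteq> {}\<close> bounded_imp_bdd_below[OF bdd]]) auto
      with \<open>e > 0\<close> show "dist (Inf (g n ` S)) (Inf (u ` S)) < e"
        by (simp add: dist_real_def)
    qed
  qed
qed

lemma tendsto_osc_uniform_limit:
  assumes "uniform_limit {-pi..pi} g u F" and "bounded (u ` {-pi..pi})"
  shows "((\<lambda>n. osc (g n)) \<longlongrightarrow> osc u) F"
  unfolding osc_def
  using assms by (intro tendsto_diff tendsto_Sup_image_uniform_limit tendsto_Inf_image_uniform_limit) auto

lemma uniform_limit_of_dist_le:
  fixes g :: "'b \<Rightarrow> 'a \<Rightarrow> 'c::metric_space"
  assumes "\<And>n x. x \<in> S \<Longrightarrow> dist (g n x) (u x) \<le> d n" and "(d \<longlongrightarrow> 0) F"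
  shows "uniform_limit S g u F"
proof (rule uniform_limitI)
  fix e :: real assume "e > 0"
  with \<open>(d \<longlongrightarrow> 0) F\<close> have "\<forall>\<^sub>F n in F. d n < e"
    by (rule order_tendstoD)
  then show "\<forall>\<^sub>F n in F. \<forall>x\<in>S. dist (g n x) (u x) < e"
    using assms(1) by (auto elim!: eventually_mono intro: le_less_trans)
qed

lemma set_integral_abs_diff_tendsto_zero:
  fixes s :: "nat \<Rightarrow> 'a \<Rightarrow> real"
  assumes s: "\<And>i. set_borel_measurable M A (s i)" and f: "set_borel_measurable M A f"
    and w: "set_integrable M A w"
    and lim: "AE x\<in>A in M. (\<lambda>i. s i x) \<longlonglongrightarrow> f x"
    and bound: "\<And>i. AE x\<in>A in M. \<bar>s i x\<bar> \<le> w x"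
  shows "set_integrable M A f" and "(\<lambda>i. LINT x:A|M. \<bar>s i x - f x\<bar>) \<longlonglongrightarrow> 0"
proof -
  have f_bound: "AE x\<in>A in M. \<bar>f x\<bar> \<le> w x"
  proof -
    have "AE x in M. \<forall>i. x \<in> A \<longrightarrow> \<bar>s i x\<bar> \<le> w x"
      by (intro AE_all_countable[THEN iffD2] allI bound)
    with lim show ?thesis
      by eventually_elim (auto intro: LIMSEQ_le_const2[OF tendsto_rabs])
  qed
  show "set_integrable M A f"
    using f_bound by (intro set_integrable_bound[OF w f]) (auto elim: AE_mp)
  have "(\<lambda>i. integral\<^sup>L M (\<lambda>x. indicator A x * \<bar>s i x - f x\<bar>))
      \<longlonglongrightarrow> integral\<^sup>L M (\<lambda>x. 0::real)"
  proof (rule integral_dominated_convergence)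
    show "integrable M (\<lambda>x. 2 * (indicator A x * w x))"
      using w unfolding set_integrable_def by simp
    show "AE x in M. (\<lambda>i. indicator A x * \<bar>s i x - f x\<bar>) \<longlonglongrightarrow> 0"
      using lim by eventually_elim
        (auto simp: indicator_def tendsto_rabs_zero_iff LIM_zero_iff)
    show "AE x in M. norm (indicator A x * \<bar>s i x - f x\<bar>) \<le> 2 * (indicator A x * w x)" for i
      using bound[of i] f_bound by eventually_elim (auto simp: indicator_def)
    show "(\<lambda>x. indicator A x * \<bar>s i x - f x\<bar>) \<in> borel_measurable M" for i
    proof -
      have "(\<lambda>x. indicator A x * s i x) \<in> borel_measurable M"
        and "(\<lambda>x. indicator A x * f x) \<in> borel_measurable M"
        using s[of i] f by (simp_all add: set_borel_measurable_def)
      then have "(\<lambda>x. \<bar>indicator A x * s i x - indicator A x * f x\<bar>) \<in> borel_measurable M"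
        by (intro borel_measurable_abs borel_measurable_diff)
      moreover have "(\<lambda>x. \<bar>indicator A x * s i x - indicator A x * f x\<bar>)
          = (\<lambda>x. indicator A x * \<bar>s i x - f x\<bar>)"
        by (auto simp: indicator_def)
      ultimately show ?thesis by simp
    qed
  qed simp
  then show "(\<lambda>i. LINT x:A|M. \<bar>s i x - f x\<bar>) \<longlonglongrightarrow> 0"
    by (simp add: set_lebesgue_integral_def)
qed

lemma set_borel_measurable_lebesgue_AE_LIMSEQ:
  fixes s :: "nat \<Rightarrow> 'a::euclidean_space \<Rightarrow> real"
  assumes s: "\<And>i. set_borel_measurable lebesgue A (s i)"
    and lim: "AE x\<in>A in lebesgue. (\<lambda>i. s i x) \<longlonglongrightarrow> f x"
  shows "set_borel_measurable lebesgue A f"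
  unfolding set_borel_measurable_def
proof (rule borel_measurable_AE)
  show "(\<lambda>x. lim (\<lambda>i. indicator A x *\<^sub>R s i x)) \<in> borel_measurable lebesgue"
    using s unfolding set_borel_measurable_def by (rule borel_measurable_lim_metric)
  show "AE x in lebesgue. lim (\<lambda>i. indicator A x *\<^sub>R s i x) = indicator A x *\<^sub>R f x"
    using lim by eventually_elim (auto simp: indicator_def intro: limI)
qed

lemma green_bounded:
  obtains K where "\<And>x y. x \<in> {-pi..pi} \<Longrightarrow> y \<in> {-pi..pi} \<Longrightarrow> \<bar>green \<alpha> x y\<bar> \<le> K"
proof -
  have "continuous_on ({-pi..pi} \<times> {-pi..pi}) (\<lambda>(x, y). green \<alpha> x y)"
    unfolding green_def case_prod_unfold by (intro continuous_intros)
  then have "bounded ((\<lambda>(x, y). green \<alpha> x y) ` ({-pi..pi} \<times> {-pi..pi}))"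
    by (intro compact_imp_bounded compact_continuous_image compact_Times) auto
  then obtain K where "\<forall>z \<in> {-pi..pi} \<times> {-pi..pi}. norm (case z of (x, y) \<Rightarrow> green \<alpha> x y) \<le> K"
    unfolding bounded_iff by auto
  then show ?thesis using that by fastforce
qed

lemma set_integrable_green_mult:
  assumes "set_integrable lebesgue {-pi..pi} g"
  shows "set_integrable lebesgue {-pi..pi} (\<lambda>y. green \<alpha> x y * g y)"
proof (rule absolutely_integrable_bounded_measurable_product_real)
  have cont: "continuous_on {-pi..pi} (green \<alpha> x)"
    unfolding green_def by (intro continuous_intros)
  then show "green \<alpha> x \<in> borel_measurable (lebesgue_on {-pi..pi})"
    by (intro continuous_imp_measurable_on_sets_lebesgue) auto
  show "bounded (green \<alpha> x ` {-pi..pi})"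
    using cont by (intro compact_imp_bounded compact_continuous_image) auto
qed (use assms in auto)

lemma u_sol_diff:
  assumes "set_integrable lebesgue {-pi..pi} g" "set_integrable lebesgue {-pi..pi} h"
  shows "u_sol \<alpha> g x - u_sol \<alpha> h x = u_sol \<alpha> (\<lambda>y. g y - h y) x"
  using set_integral_diff(2)[OF set_integrable_green_mult[OF assms(1)]
      set_integrable_green_mult[OF assms(2)]]
  unfolding u_sol_def by (simp add: right_diff_distrib)

lemma u_sol_abs_le:
  assumes K: "\<And>y. y \<in> {-pi..pi} \<Longrightarrow> \<bar>green \<alpha> x y\<bar> \<le> K"
    and g: "set_integrable lebesgue {-pi..pi} g"
  shows "\<bar>u_sol \<alpha> g x\<bar> \<le> K * (LINT y:{-pi..pi}|lebesgue. \<bar>g y\<bar>)"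
proof -
  have "\<bar>u_sol \<alpha> g x\<bar> \<le> (LINT y:{-pi..pi}|lebesgue. \<bar>green \<alpha> x y * g y\<bar>)"
    unfolding u_sol_def using set_integral_norm_bound[OF set_integrable_green_mult[OF g]] by simp
  also have "\<dots> \<le> (LINT y:{-pi..pi}|lebesgue. K * \<bar>g y\<bar>)"
    using K
    by (intro set_integral_mono set_integrable_abs set_integrable_green_mult g
        set_integrable_mult_right)
      (auto simp: abs_mult intro: mult_right_mono)
  finally show ?thesis by simp
qed

theorem lemma4:
  fixes \<alpha> m M s :: real and fn :: "nat \<Rightarrow> real \<Rightarrow> real" and f :: "real \<Rightarrow> real"
  assumes "\<alpha> > 0" and "0 \<le> m" and "m < s" and "s < M"
    and "\<And>n. fn n \<in> Fam m M s"
    and "AE x in lebesgue. x \<in> {-pi..pi} \<longrightarrow> (\<lambda>n. fn n x) \<longlonglongrightarrow> f x"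
  shows "uniform_limit {-pi..pi} (\<lambda>n. u_sol \<alpha> (fn n)) (u_sol \<alpha> f) sequentially
    \<and> (\<exists>r. strict_mono r \<and> (\<lambda>k. osc (u_sol \<alpha> (fn (r k)))) \<longlonglongrightarrow> osc (u_sol \<alpha> f))"
proof -
  let ?S = "{-pi..pi} :: real set"
  obtain K where K: "\<And>x y. x \<in> ?S \<Longrightarrow> y \<in> ?S \<Longrightarrow> \<bar>green \<alpha> x y\<bar> \<le> K"
    using green_bounded by blast
  have fn_int: "set_integrable lebesgue ?S (fn n)"
    and fn_bound: "AE y\<in>?S in lebesgue. \<bar>fn n y\<bar> \<le> M" for n
    using assms(2) assms(5)[of n] unfolding Fam_def by (auto elim: AE_mp)
  have fn_meas: "set_borel_measurable lebesgue ?S (fn n)" for n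
    using fn_int[of n] unfolding set_integrable_def set_borel_measurable_def
    by (rule borel_measurable_integrable)
  have f_meas: "set_borel_measurable lebesgue ?S f"
    using fn_meas assms(6) by (rule set_borel_measurable_lebesgue_AE_LIMSEQ)
  have f_int: "set_integrable lebesgue ?S f"
    and L1: "(\<lambda>n. LINT y:?S|lebesgue. \<bar>fn n y - f y\<bar>) \<longlonglongrightarrow> 0"
    by (rule set_integral_abs_diff_tendsto_zero[OF fn_meas f_meas _ assms(6) fn_bound]; simp)+
  have dist_le:
    "dist (u_sol \<alpha> (fn n) x) (u_sol \<alpha> f x) \<le> K * (LINT y:?S|lebesgue. \<bar>fn n y - f y\<bar>)"
    if "x \<in> ?S" for n x
    using u_sol_abs_le[OF K[OF that] set_integral_diff(1)[OF fn_int f_int]]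
    by (simp add: dist_real_def u_sol_diff[OF fn_int f_int])
  have unif: "uniform_limit ?S (\<lambda>n. u_sol \<alpha> (fn n)) (u_sol \<alpha> f) sequentially"
    using dist_le tendsto_mult_right_zero[OF L1] by (rule uniform_limit_of_dist_le)
  have "\<bar>u_sol \<alpha> f x\<bar> \<le> K * (LINT y:?S|lebesgue. \<bar>f y\<bar>)" if "x \<in> ?S" for x
    using K[OF that] f_int by (rule u_sol_abs_le)
  then have "bounded (u_sol \<alpha> f ` ?S)"
    unfolding bounded_iff real_norm_def
    by (intro exI[of _ "K * (LINT y:?S|lebesgue. \<bar>f y\<bar>)"]) auto
  with unif have "(\<lambda>n. osc (u_sol \<alpha> (fn n))) \<longlonglongrightarrow> osc (u_sol \<alpha> f)"
    by (rule tendsto_osc_uniform_limit)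
  with unif show ?thesis
    by (intro conjI exI[of _ id]) (simp_all add: strict_mono_id)
qed

end
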